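(* Let $n$ be a positive integer and assume hypothesis $(\star)$ for $\mathbb{R}^n$: for every family $\mathcal{F}$ of closed Lebesgue-null subsets of $\mathbb{R}^n$ with $|\mathcal{F}|<\mathfrak{c}$ and every Lebesgue-null set $N\subset\mathbb{R}^n$, one has $N\cup\bigcup\mathcal{F}\neq\mathbb{R}^n$. (In particular this holds under the Continuum Hypothesis.) Then there exists a set $A\subset\mathbb{R}^n$ that is not Lebesgue null such that for every continuous function $f:\mathbb{R}^n\to\mathbb{R}$ the set $f(A)$ contains no non-degenerate interval.
   Context: $\mathfrak{c}$ denotes the cardinality of the continuum. *)

theory Defs
  imports "HOL-Analysis.Analysis" "HOL-Library.Equipollence"
begin

end

theory Submission
  imports Defs
begin

(* Index all constraints by
   the reals, well-ordered in order type of the continuum: the stage alpha carries a null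
   set N alpha (a cofinal enumeration of all null sets, obtained from null G-delta hulls),
   and a test (f alpha, p alpha, q alpha) consisting of a continuous function and a
   non-degenerate interval (all such tests, which are determined by countable data).  By
   transfinite recursion choose points a alpha and values y alpha in (p alpha, q alpha)
   so that f alpha never takes the value y alpha on the sequence a.  Hypothesis (star)
   provides the points; the values come from cardinality, since a continuous function has
   only countably many non-null fibres.  Since a alpha avoids N alpha, the range of a lies in
   no null set, and f alpha misses the value y alpha on it. *)

unbundle cardinal_syntax
definition star_hypothesis :: "'a::euclidean_space itself \<Rightarrow> bool" where
  "star_hypothesis _ \<longleftrightarrow> (\<forall>(F :: 'a set set) (N :: 'a set).
     (\<forall>S\<in>F. closed S \<and> S \<in> null_sets lebesgue) \<longrightarrow> F \<prec> (UNIV :: real set) \<longrightarrow>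
     N \<in> null_sets lebesgue \<longrightarrow> N \<union> \<Union>F \<noteq> UNIV)"

lemma lesspoll_iff_ordLess: "A \<prec> B \<longleftrightarrow> |A| <o |B|"
  unfolding lesspoll_def lepoll_def eqpoll_iff_card_of_ordIso
  by (metis card_of_ordLeq not_ordLess_ordIso ordLeq_iff_ordLess_or_ordIso)

lemma lesspoll_Un_infinite:
  assumes "infinite C" "A \<prec> C" "B \<prec> C"
  shows "A \<union> B \<prec> C"
  using assms card_of_Un_ordLess_infinite unfolding lesspoll_iff_ordLess by blast

lemma countable_lesspoll_reals:
  assumes "countable C"
  shows "C \<prec> (UNIV :: real set)"
proof -
  have "C \<lesssim> (UNIV :: nat set)"
    using assms countable_def lepoll_def by blast
  moreover have "(UNIV :: nat set) \<prec> (UNIV :: real set)"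
    unfolding lesspoll_def
    by (meson countable_eqpoll countableI_type eqpoll_sym uncountable_UNIV_real
        infinite_UNIV_char_0 infinite_le_lepoll)
  ultimately show ?thesis by (rule lesspoll_trans1)
qed

(* Every non-degenerate open interval has the size of the continuum, so no small set
   covers it. *)
lemma interval_not_covered:
  fixes p q :: real
  assumes "p < q" and "C \<prec> (UNIV :: real set)"
  obtains y where "p < y" "y < q" "y \<notin> C"
proof -
  have "\<not> {p<..<q} \<subseteq> C"
  proof
    assume "{p<..<q} \<subseteq> C"
    then have "(UNIV :: real set) \<lesssim> C"
      using open_interval_eqpoll_reals[of p q] assms(1)
      by (meson eqpoll_sym lepoll_trans1 subset_imp_lepoll)
    then show False using assms(2) by (meson lesspoll_trans2 lesspoll_not_refl)
  qed
  then show thesis using that by (meson greaterThanLessThan_iff subsetI)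
qed

(* If a type has at most continuum many elements, so do its sequences: encode a
   sequence of sets of naturals as a single set of naturals. *)
lemma nat_seq_lepoll_reals:
  assumes "(UNIV :: 'b set) \<lesssim> (UNIV :: real set)"
  shows "(UNIV :: (nat \<Rightarrow> 'b) set) \<lesssim> (UNIV :: real set)"
proof -
  have "(UNIV :: 'b set) \<lesssim> (UNIV :: nat set set)"
    using assms eqpoll_sym[OF nat_sets_eqpoll_reals] by (rule lepoll_trans2)
  then obtain g :: "'b \<Rightarrow> nat set" where g: "inj g"
    unfolding lepoll_def by auto
  define code where "code F = prod_encode ` (SIGMA k:UNIV. g (F k))" for F :: "nat \<Rightarrow> 'b"
  have "inj code"
  proof (rule injI)
    fix F G assume "code F = code G"
    then have "(SIGMA k:UNIV. g (F k)) = (SIGMA k:UNIV. g (G k))"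
      unfolding code_def by (simp add: inj_image_eq_iff[OF inj_prod_encode])
    then have "g (F k) = g (G k)" for k by blast
    then show "F = G" using g by (simp add: inj_eq fun_eq_iff)
  qed
  then have "(UNIV :: (nat \<Rightarrow> 'b) set) \<lesssim> (UNIV :: nat set set)"
    unfolding lepoll_def by blast
  then show ?thesis
    using nat_sets_eqpoll_reals by (rule lepoll_trans2)
qed

lemma lepoll_enumeration:
  fixes A :: "'a set" and B :: "'b set"
  assumes "A \<lesssim> B" and "A \<noteq> {}"
  obtains e :: "'b \<Rightarrow> 'a" where "e ` B = A"
proof -
  obtain g :: "'b \<Rightarrow> 'a" where g: "A \<subseteq> g ` B"
    using assms(1) unfolding lepoll_iff by (elim exE)
  obtain a where a: "a \<in> A" using assms(2) by blast
  define e where "e b = (if g b \<in> A then g b else a)" for b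
  have "e ` B \<subseteq> A" using a by (auto simp: e_def)
  moreover have "A \<subseteq> e ` B"
  proof
    fix x assume "x \<in> A"
    then obtain b where "b \<in> B" "x = g b" using g by blast
    then show "x \<in> e ` B" using \<open>x \<in> A\<close> by (simp add: e_def)
  qed
  ultimately show thesis using that by blast
qed

(* A Borel function on Euclidean space has only countably many fibres of positive
   measure: on each ball its push-forward measure is finite and thus has only
   countably many atoms. *)
lemma countable_nonnull_fibres:
  fixes f :: "'a::euclidean_space \<Rightarrow> real"
  assumes f: "f \<in> borel_measurable borel"
  shows "countable {y. f -` {y} \<notin> null_sets lebesgue}"
proof -
  define B where "B k = restrict_space lborel (cball (0::'a) (real k))" for k :: nat
  define M where "M k = distr (B k) borel f" for k
  have fk: "f \<in> borel_measurable (B k)" for k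
    unfolding B_def using f by (intro measurable_restrict_space1) simp
  have "finite_measure (B k)" for k
    unfolding B_def using emeasure_lborel_cball_finite[of 0 "real k"]
    by (intro finite_measureI) (simp add: emeasure_restrict_space less_top)
  then have fin: "finite_measure (M k)" for k
    unfolding M_def using fk by (rule finite_measure.finite_measure_distr)
  have "countable (\<Union>k. {y. measure (M k) {y} \<noteq> 0})"
    using fin by (intro countable_UN[OF countableI_type] finite_measure.countable_support)
  moreover have "{y. f -` {y} \<notin> null_sets lebesgue} \<subseteq> (\<Union>k. {y. measure (M k) {y} \<noteq> 0})"
  proof (rule subsetI, rule ccontr)
    fix y assume y: "y \<in> {y. f -` {y} \<notin> null_sets lebesgue}"
      and "y \<notin> (\<Union>k. {y. measure (M k) {y} \<noteq> 0})"
    then have "{y} \<in> null_sets (M k)" for k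
      using finite_measure.emeasure_eq_measure[OF fin] by (auto simp: M_def)
    then have "f -` {y} \<inter> cball 0 (real k) \<in> null_sets lborel" for k
      using null_sets_distr_iff[OF fk] null_sets_restrict_space[of "cball 0 (real k)" lborel]
      by (auto simp: M_def B_def Int_commute)
    then have "(\<Union>k. f -` {y} \<inter> cball 0 (real k)) \<in> null_sets lborel"
      by (rule null_sets_UN)
    moreover have "(\<Union>k. f -` {y} \<inter> cball 0 (real k)) = f -` {y}"
      by (auto simp: dist_norm real_arch_simple)
    ultimately have "f -` {y} \<in> null_sets lborel" by simp
    with y show False by (auto dest: null_sets_completionI)
  qed
  ultimately show ?thesis by (rule countable_subset[rotated])
qed

lemma value_with_null_fibre:
  fixes f :: "'a::euclidean_space \<Rightarrow> real"
  assumes "f \<in> borel_measurable borel" and "p < q" and "Y \<prec> (UNIV :: real set)"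
  obtains y where "p < y" "y < q" "y \<notin> Y" "f -` {y} \<in> null_sets lebesgue"
proof -
  have "{y. f -` {y} \<notin> null_sets lebesgue} \<prec> (UNIV :: real set)"
    using countable_nonnull_fibres[OF assms(1)] by (rule countable_lesspoll_reals)
  then have "Y \<union> {y. f -` {y} \<notin> null_sets lebesgue} \<prec> (UNIV :: real set)"
    using assms(3) infinite_UNIV_char_0 by (intro lesspoll_Un_infinite)
  then obtain y where "p < y" "y < q" "y \<notin> Y \<union> {y. f -` {y} \<notin> null_sets lebesgue}"
    by (rule interval_not_covered[OF assms(2)])
  then show thesis using that by blast
qed

(* There are at most continuum many G-delta sets: each is determined by a sequence of
   sets of indices into a countable base. *)
lemma gdelta_lepoll_reals:
  "{C :: 'a::euclidean_space set. gdelta C} \<lesssim> (UNIV :: real set)" (is "?D \<lesssim> _")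
proof -
  obtain B :: "nat \<Rightarrow> 'a set" where B: "\<And>S. open S \<Longrightarrow> \<exists>k. S = \<Union>{B n |n. n \<in> k}"
    by (rule univ_second_countable_sequence) blast
  define G where "G p = (\<Inter>k. \<Union>{B n |n. n \<in> p k})" for p :: "nat \<Rightarrow> nat set"
  have "?D \<subseteq> range G"
  proof
    fix C assume "C \<in> ?D"
    then obtain U :: "nat \<Rightarrow> 'a set" where U: "\<And>n. open (U n)" "C = \<Inter>(range U)"
      by (auto elim!: gdelta.cases)
    have "\<forall>n. \<exists>k. U n = \<Union>{B m |m. m \<in> k}" using B U(1) by blast
    then obtain p where "\<forall>n. U n = \<Union>{B m |m. m \<in> p n}" by (rule choice[THEN exE])
    then have "C = G p" unfolding G_def U(2) by simp
    then show "C \<in> range G" by blast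
  qed
  then have "?D \<lesssim> (UNIV :: (nat \<Rightarrow> nat set) set)"
    by (rule subset_image_lepoll)
  also have "\<dots> \<lesssim> (UNIV :: real set)"
    using nat_sets_eqpoll_reals by (intro nat_seq_lepoll_reals eqpoll_imp_lepoll)
  finally show ?thesis .
qed

lemma null_set_in_gdelta_null:
  assumes "S \<in> null_sets lebesgue"
  obtains C :: "'a::euclidean_space set" where "gdelta C" "C \<in> null_sets lebesgue" "S \<subseteq> C"
proof -
  obtain C T where C: "gdelta C" "T \<in> null_sets lebesgue" "S \<union> T = C"
    by (rule lebesgue_set_almost_gdelta[OF null_setsD2[OF assms]])
  have "C \<in> null_sets lebesgue"
    using null_sets.Un[OF assms C(2)] C(3) by simp
  with C show thesis using that by blast
qed

lemma null_sets_cofinal_enumeration: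
  obtains N :: "real \<Rightarrow> 'a::euclidean_space set"
  where "\<And>\<alpha>. N \<alpha> \<in> null_sets lebesgue" "\<And>S. S \<in> null_sets lebesgue \<Longrightarrow> \<exists>\<alpha>. S \<subseteq> N \<alpha>"
proof -
  let ?G = "{C :: 'a set. gdelta C \<and> C \<in> null_sets lebesgue}"
  have "?G \<subseteq> {C. gdelta C}" by blast
  then have "?G \<lesssim> (UNIV :: real set)"
    using gdelta_lepoll_reals by (rule lepoll_trans[OF subset_imp_lepoll])
  moreover have "gdelta ({} :: 'a set)"
    using gdelta.intros[of "\<lambda>_. {}"] by simp
  then have "?G \<noteq> {}" by blast
  ultimately obtain N :: "real \<Rightarrow> 'a set" where N: "N ` UNIV = ?G"
    by (rule lepoll_enumeration)
  show thesis
  proof (rule that)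
    show "N \<alpha> \<in> null_sets lebesgue" for \<alpha> using N by blast
    show "\<exists>\<alpha>. S \<subseteq> N \<alpha>" if S: "S \<in> null_sets lebesgue" for S
    proof -
      obtain C where "gdelta C" "C \<in> null_sets lebesgue" "S \<subseteq> C"
        using S by (rule null_set_in_gdelta_null)
      moreover from this have "C \<in> N ` UNIV" using N by blast
      ultimately show ?thesis by blast
    qed
  qed
qed

(* There are at most continuum many triples (f, p, q) with f continuous and p < q:
   f is determined by its values on a countable dense set. *)
lemma continuous_tests_lepoll_reals:
  "{(f :: 'a::second_countable_topology \<Rightarrow> real, p :: real, q :: real).
      continuous_on UNIV f \<and> p < q} \<lesssim> (UNIV :: real set)"
  (is "?T \<lesssim> _")
proof -
  obtain D :: "'a set"
    where D: "countable D" "\<And>X. open X \<Longrightarrow> X \<noteq> {} \<Longrightarrow> \<exists>d \<in> D. d \<in> X"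
    using countable_dense_setE by blast
  have "D \<noteq> {}" using D(2)[of UNIV] by auto
  define d where "d = from_nat_into D"
  have rd: "range d = D" unfolding d_def using D(1) \<open>D \<noteq> {}\<close> by simp
  define code where "code = (\<lambda>(f :: 'a \<Rightarrow> real, p :: real, q :: real) (k :: nat).
      if k = 0 then p else if k = 1 then q else f (d (k - 2)))"
  have "inj_on code ?T"
  proof (rule inj_onI)
    fix x y assume "x \<in> ?T" "y \<in> ?T" and eq: "code x = code y"
    then obtain f p q g p' q' where xy: "x = (f, p, q)" "y = (g, p', q')"
      and fc: "continuous_on UNIV f" and gc: "continuous_on UNIV g" by auto
    have "p = p'" "q = q'"
      using fun_cong[OF eq, of 0] fun_cong[OF eq, of 1] by (simp_all add: xy code_def)
    moreover have "f (d k) = g (d k)" for k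
      using fun_cong[OF eq, of "k + 2"] by (simp add: xy code_def)
    then have "f z = g z" if "z \<in> D" for z
      using that rd by auto
    then have "f = g"
      using D(2)[OF open_Collect_neq[OF fc gc]] by auto
    ultimately show "x = y" by (simp add: xy)
  qed
  then have "?T \<lesssim> (UNIV :: (nat \<Rightarrow> real) set)" unfolding lepoll_def by blast
  also have "\<dots> \<lesssim> (UNIV :: real set)" by (rule nat_seq_lepoll_reals) simp
  finally show ?thesis .
qed

lemma continuous_tests_enumeration:
  obtains f :: "real \<Rightarrow> 'a::second_countable_topology \<Rightarrow> real" and p q :: "real \<Rightarrow> real"
  where "\<And>\<alpha>. continuous_on UNIV (f \<alpha>)" "\<And>\<alpha>. p \<alpha> < q \<alpha>"
    "\<And>g u v. continuous_on UNIV g \<Longrightarrow> u < v \<Longrightarrow> \<exists>\<alpha>. f \<alpha> = g \<and> p \<alpha> = u \<and> q \<alpha> = v"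
proof -
  let ?T = "{(g :: 'a \<Rightarrow> real, u :: real, v :: real). continuous_on UNIV g \<and> u < v}"
  have "((\<lambda>_. 0), 0, 1) \<in> ?T" by simp
  then have "?T \<noteq> {}" by auto
  with continuous_tests_lepoll_reals
  obtain t :: "real \<Rightarrow> ('a \<Rightarrow> real) \<times> real \<times> real" where t: "t ` UNIV = ?T"
    by (rule lepoll_enumeration)
  show thesis
  proof (rule that[of "\<lambda>\<alpha>. fst (t \<alpha>)" "\<lambda>\<alpha>. fst (snd (t \<alpha>))" "\<lambda>\<alpha>. snd (snd (t \<alpha>))"])
    fix \<alpha>
    have "t \<alpha> \<in> ?T" unfolding t[symmetric] by (rule rangeI)
    then show "continuous_on UNIV (fst (t \<alpha>))" "fst (snd (t \<alpha>)) < snd (snd (t \<alpha>))" by auto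
  next
    fix g :: "'a \<Rightarrow> real" and u v :: real
    assume "continuous_on UNIV g" "u < v"
    then have "(g, u, v) \<in> t ` UNIV" using t by simp
    then obtain \<alpha> where "(g, u, v) = t \<alpha>" by (rule rangeE)
    then show "\<exists>\<alpha>. fst (t \<alpha>) = g \<and> fst (snd (t \<alpha>)) = u \<and> snd (snd (t \<alpha>)) = v"
      by (metis fst_conv snd_conv)
  qed
qed

lemma well_order_recursive_choice:
  fixes r :: "'i rel" and P :: "'i \<Rightarrow> ('i \<Rightarrow> 'x) \<Rightarrow> 'x \<Rightarrow> bool"
  assumes wo: "Well_order r"
    and locality: "\<And>\<alpha> g h x. (\<And>\<beta>. \<beta> \<in> underS r \<alpha> \<Longrightarrow> g \<beta> = h \<beta>) \<Longrightarrow> P \<alpha> g x \<Longrightarrow> P \<alpha> h x"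
    and step: "\<And>\<alpha> g. (\<And>\<beta>. \<beta> \<in> underS r \<alpha> \<Longrightarrow> P \<beta> g (g \<beta>)) \<Longrightarrow> \<exists>x. P \<alpha> g x"
  obtains s where "\<And>\<alpha>. P \<alpha> s (s \<alpha>)"
proof -
  define R where "R = r - Id"
  have wf: "wf R" unfolding R_def using wo by (simp add: wo_rel.WF wo_rel_def)
  have under: "\<beta> \<in> underS r \<alpha> \<longleftrightarrow> (\<beta>, \<alpha>) \<in> R" for \<alpha> \<beta>
    by (auto simp: underS_def R_def)
  define s where "s = wfrec R (\<lambda>g \<alpha>. SOME x. P \<alpha> g x)"
  have s_eq: "s \<alpha> = (SOME x. P \<alpha> (cut s R \<alpha>) x)" for \<alpha>
    unfolding s_def by (subst wfrec[OF wf]) simp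
  have cut_s: "cut s R \<alpha> \<beta> = s \<beta>" if "\<beta> \<in> underS r \<alpha>" for \<alpha> \<beta>
    using that under by (simp add: cut_apply)
  have "P \<alpha> s (s \<alpha>)" for \<alpha>
  proof (induction \<alpha> rule: wf_induct[OF wf])
    case (1 \<alpha>)
    then have "\<exists>x. P \<alpha> s x" using under by (intro step) blast
    then have "\<exists>x. P \<alpha> (cut s R \<alpha>) x" using locality[of \<alpha> s "cut s R \<alpha>"] cut_s by metis
    then have "P \<alpha> (cut s R \<alpha>) (s \<alpha>)" by (subst s_eq) (rule someI_ex)
    then show ?case using locality[of \<alpha> "cut s R \<alpha>" s] cut_s by metis
  qed
  then show thesis by (rule that)
qed

lemma initial_segment_lesspoll:
  assumes "a \<in> A"
  shows "underS (card_of A) a \<prec> A"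
  using card_of_underS[OF card_of_Card_order, of a A] assms
  unfolding lesspoll_iff_ordLess by (simp add: Field_card_of)

lemma well_order_trichotomy:
  assumes "Well_order r" and "Field r = UNIV"
  shows "\<alpha> = \<beta> \<or> \<beta> \<in> underS r \<alpha> \<or> \<alpha> \<in> underS r \<beta>"
  using wo_rel.TOTALS[of r] assms by (auto simp: wo_rel_def underS_def)

lemma diagonal_step:
  fixes Z :: "'i \<Rightarrow> 'a::euclidean_space set" and h :: "'a \<Rightarrow> real"
  assumes star: "star_hypothesis TYPE('a)"
    and S: "S \<prec> (UNIV :: real set)"
    and Z: "\<And>\<beta>. \<beta> \<in> S \<Longrightarrow> closed (Z \<beta>) \<and> Z \<beta> \<in> null_sets lebesgue"
    and M: "M \<in> null_sets lebesgue"
    and h: "continuous_on UNIV h" and "u < v"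
    and Y: "Y \<prec> (UNIV :: real set)"
  obtains x w where "x \<notin> M" "\<And>\<beta>. \<beta> \<in> S \<Longrightarrow> x \<notin> Z \<beta>" "u < w" "w < v" "w \<notin> Y" "h x \<noteq> w"
    "h -` {w} \<in> null_sets lebesgue"
proof -
  have "\<forall>T\<in>Z ` S. closed T \<and> T \<in> null_sets lebesgue" using Z by blast
  moreover have "Z ` S \<prec> (UNIV :: real set)" using image_lepoll S by (rule lesspoll_trans1)
  ultimately have "M \<union> \<Union>(Z ` S) \<noteq> UNIV"
    using star M unfolding star_hypothesis_def by simp
  then obtain x where x: "x \<notin> M" "\<And>\<beta>. \<beta> \<in> S \<Longrightarrow> x \<notin> Z \<beta>" by blast
  have "{h x} \<prec> (UNIV :: real set)" by (rule countable_lesspoll_reals) simp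
  then have "{h x} \<union> Y \<prec> (UNIV :: real set)"
    using Y by (rule lesspoll_Un_infinite[OF infinite_UNIV_char_0])
  then obtain w where "u < w" "w < v" "w \<notin> {h x} \<union> Y" "h -` {w} \<in> null_sets lebesgue"
    by (rule value_with_null_fibre[OF borel_measurable_continuous_onI[OF h] \<open>u < v\<close>])
  with x show thesis by (intro that) auto
qed

lemma diagonal_sequence:
  fixes N :: "real \<Rightarrow> 'a::euclidean_space set" and f :: "real \<Rightarrow> 'a \<Rightarrow> real"
    and p q :: "real \<Rightarrow> real"
  assumes star: "star_hypothesis TYPE('a)"
    and N: "\<And>\<alpha>. N \<alpha> \<in> null_sets lebesgue"
    and f: "\<And>\<alpha>. continuous_on UNIV (f \<alpha>)"
    and pq: "\<And>\<alpha>. p \<alpha> < q \<alpha>"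
  obtains a :: "real \<Rightarrow> 'a" and y :: "real \<Rightarrow> real"
  where "\<And>\<alpha>. a \<alpha> \<notin> N \<alpha>" "\<And>\<alpha>. p \<alpha> < y \<alpha> \<and> y \<alpha> < q \<alpha>" "\<And>\<alpha> \<beta>. f \<alpha> (a \<beta>) \<noteq> y \<alpha>"
proof -
  define r where "r = card_of (UNIV :: real set)"
  have wo: "Well_order r" unfolding r_def by (rule card_of_Well_order)
  have field: "Field r = UNIV" unfolding r_def by (rule Field_card_of)
  (* P alpha g z: the pair z = (a alpha, y alpha) is admissible at stage alpha, given the
     choices g beta of the earlier stages. *)
  define P where "P \<alpha> g z \<longleftrightarrow> fst z \<notin> N \<alpha> \<and> p \<alpha> < snd z \<and> snd z < q \<alpha> \<and>
      f \<alpha> -` {snd z} \<in> null_sets lebesgue \<and> f \<alpha> (fst z) \<noteq> snd z \<and>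
      (\<forall>\<beta>\<in>underS r \<alpha>. f \<beta> (fst z) \<noteq> snd (g \<beta>) \<and> f \<alpha> (fst (g \<beta>)) \<noteq> snd z)"
    for \<alpha> and g :: "real \<Rightarrow> 'a \<times> real" and z
  have step: "\<exists>z. P \<alpha> g z" if IH: "\<And>\<beta>. \<beta> \<in> underS r \<alpha> \<Longrightarrow> P \<beta> g (g \<beta>)" for \<alpha> g
  proof -
    have small: "underS r \<alpha> \<prec> (UNIV :: real set)"
      unfolding r_def by (rule initial_segment_lesspoll) simp
    have images: "(\<lambda>\<beta>. f \<alpha> (fst (g \<beta>))) ` underS r \<alpha> \<prec> (UNIV :: real set)"
      using image_lepoll small by (rule lesspoll_trans1)
    obtain x v where "x \<notin> N \<alpha>" "\<And>\<beta>. \<beta> \<in> underS r \<alpha> \<Longrightarrow> x \<notin> f \<beta> -` {snd (g \<beta>)}"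
      "p \<alpha> < v" "v < q \<alpha>" "v \<notin> (\<lambda>\<beta>. f \<alpha> (fst (g \<beta>))) ` underS r \<alpha>" "f \<alpha> x \<noteq> v"
      "f \<alpha> -` {v} \<in> null_sets lebesgue"
    proof (rule diagonal_step[where Z = "\<lambda>\<beta>. f \<beta> -` {snd (g \<beta>)}",
          OF star small _ N[of \<alpha>] f[of \<alpha>] pq[of \<alpha>] images])
      fix \<beta> assume "\<beta> \<in> underS r \<alpha>"
      then have "f \<beta> -` {snd (g \<beta>)} \<in> null_sets lebesgue" using IH unfolding P_def by blast
      moreover have "closed (f \<beta> -` {snd (g \<beta>)})"
        using f[of \<beta>] by (intro continuous_closed_vimage) (auto simp: continuous_on_eq_continuous_at)
      ultimately show "closed (f \<beta> -` {snd (g \<beta>)}) \<and> f \<beta> -` {snd (g \<beta>)} \<in> null_sets lebesgue"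
        by blast
    qed (rule that)
    then have "P \<alpha> g (x, v)" unfolding P_def by auto
    then show ?thesis by blast
  qed
  obtain s where s: "\<And>\<alpha>. P \<alpha> s (s \<alpha>)"
  proof (rule well_order_recursive_choice[of r P, OF wo])
    show "P \<alpha> h z" if "\<And>\<beta>. \<beta> \<in> underS r \<alpha> \<Longrightarrow> g \<beta> = h \<beta>" and "P \<alpha> g z" for \<alpha> g h z
      using that by (auto simp: P_def)
  qed (use step that in blast)+
  show thesis
  proof
    fix \<alpha> \<beta>
    show "fst (s \<alpha>) \<notin> N \<alpha>" "p \<alpha> < snd (s \<alpha>) \<and> snd (s \<alpha>) < q \<alpha>"
      using s[of \<alpha>] by (simp_all add: P_def)
    consider "\<alpha> = \<beta>" | "\<beta> \<in> underS r \<alpha>" | "\<alpha> \<in> underS r \<beta>"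
      using well_order_trichotomy[OF wo field] by blast
    then show "f \<alpha> (fst (s \<beta>)) \<noteq> snd (s \<alpha>)"
    proof cases
      case 1 then show ?thesis using s[of \<alpha>] by (simp add: P_def)
    next
      case 2 then show ?thesis using s[of \<alpha>] by (simp add: P_def)
    next
      case 3 then show ?thesis using s[of \<beta>] by (simp add: P_def)
    qed
  qed
qed

theorem theorem3p4:
  assumes star: "\<And>(F :: (real ^ 'n) set set) (N :: (real ^ 'n) set).
      (\<forall>S\<in>F. closed S \<and> S \<in> null_sets lebesgue) \<Longrightarrow>
      F \<prec> (UNIV :: real set) \<Longrightarrow>
      N \<in> null_sets lebesgue \<Longrightarrow>
      N \<union> \<Union>F \<noteq> UNIV"
  shows "\<exists>A :: (real ^ 'n) set. A \<notin> null_sets lebesgue \<and>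
      (\<forall>f :: real ^ 'n \<Rightarrow> real. continuous_on UNIV f \<longrightarrow>
         \<not> (\<exists>a b. a < b \<and> {a..b} \<subseteq> f ` A))"
proof -
  have hypothesis: "star_hypothesis TYPE(real ^ 'n)"
    unfolding star_hypothesis_def by (intro allI impI star)
  obtain N :: "real \<Rightarrow> (real ^ 'n) set" where N: "\<And>\<alpha>. N \<alpha> \<in> null_sets lebesgue"
    and cofinal: "\<And>S. S \<in> null_sets lebesgue \<Longrightarrow> \<exists>\<alpha>. S \<subseteq> N \<alpha>"
    by (rule null_sets_cofinal_enumeration) (rule that)
  obtain f :: "real \<Rightarrow> real ^ 'n \<Rightarrow> real" and p q :: "real \<Rightarrow> real"
    where f: "\<And>\<alpha>. continuous_on UNIV (f \<alpha>)" and pq: "\<And>\<alpha>. p \<alpha> < q \<alpha>"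
    and tests: "\<And>g u v. continuous_on UNIV g \<Longrightarrow> u < v \<Longrightarrow> \<exists>\<alpha>. f \<alpha> = g \<and> p \<alpha> = u \<and> q \<alpha> = v"
    by (rule continuous_tests_enumeration) (rule that)
  obtain a :: "real \<Rightarrow> real ^ 'n" and y :: "real \<Rightarrow> real"
    where a: "\<And>\<alpha>. a \<alpha> \<notin> N \<alpha>" and y: "\<And>\<alpha>. p \<alpha> < y \<alpha> \<and> y \<alpha> < q \<alpha>"
    and missed: "\<And>\<alpha> \<beta>. f \<alpha> (a \<beta>) \<noteq> y \<alpha>"
    by (rule diagonal_sequence[OF hypothesis N f pq]) (rule that)
  show ?thesis
  proof (intro exI[of _ "range a"] conjI allI impI notI)
    assume "range a \<in> null_sets lebesgue"
    then obtain \<alpha> where "range a \<subseteq> N \<alpha>" using cofinal by blast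
    with a show False by blast
  next
    fix g :: "real ^ 'n \<Rightarrow> real"
    assume g: "continuous_on UNIV g" and "\<exists>u v. u < v \<and> {u..v} \<subseteq> g ` range a"
    then obtain u v where "u < v" "{u..v} \<subseteq> g ` range a" by blast
    moreover obtain \<alpha> where "f \<alpha> = g" "p \<alpha> = u" "q \<alpha> = v" using tests[OF g \<open>u < v\<close>] by blast
    ultimately have "y \<alpha> \<in> g ` range a" using y[of \<alpha>] by auto
    then obtain \<beta> where "g (a \<beta>) = y \<alpha>" by auto
    with missed[of \<alpha> \<beta>] \<open>f \<alpha> = g\<close> show False by simp
  qed
qed

end
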